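(* For $\mu\ge2$, the generating series $W_\mu(q)=\sum_g w_{\mu,g}q^g$, where $w_{\mu,g}$ is the number of weakly admissible compositions of $g$ whose maximal part equals $\mu$, is $$W_\mu(q)=\frac{1+\sum_{i=\lceil\mu/2\rceil}^{\mu}q^i}{1-I_\mu}\;q^\mu\;\frac{1+\sum_{i=\lfloor\mu/2\rfloor}^{\mu-1}q^i}{1-I_{\mu-1}},$$ where for $n\ge1$, $I_n=\sum_{1\le a,b\le n,\ a+b\ge n}q^{a+b}=q^n\bigl(-2+\sum_{i=0}^n(n+1-i)q^i\bigr)$.
   Context: A composition $x_1+\cdots+x_{m-1}$ of $g=\sum x_i$ (parts positive integers) with maximum $\mu$ has a last maximal part $x_l$, i.e. $x_1,\dots,x_{l-1}\le x_l=\mu$ and $x_{l+1},\dots,x_{m-1}<\mu$. It is weakly admissible if $x_l\le x_i+x_{l-i}$ for all $1\le i\le l-1$ and $x_l\le 1+x_{l+i}+x_{m-i}$ for all $1\le i\le m-1-l$. *)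

theory Defs
  imports "HOL-Computational_Algebra.Formal_Power_Series"
begin

text \<open>A composition x_1 + ... + x_{m-1} of g is a nonempty list of positive integers
  (the list has length m-1); entry x_k is xs ! (k-1).\<close>

definition composition :: "nat \<Rightarrow> nat list \<Rightarrow> bool" where
  "composition g xs \<longleftrightarrow> xs \<noteq> [] \<and> (\<forall>x\<in>set xs. 0 < x) \<and> sum_list xs = g"

definition last_max_pos :: "nat list \<Rightarrow> nat" where
  "last_max_pos xs = (GREATEST k. k \<in> {1..length xs} \<and> xs ! (k - 1) = Max (set xs))"

definition weakly_admissible :: "nat list \<Rightarrow> bool" where
  "weakly_admissible xs \<longleftrightarrow>
     (let n = length xs; l = last_max_pos xs; x = (\<lambda>k. xs ! (k - 1)) in
       (\<forall>i\<in>{1..l - 1}. x l \<le> x i + x (l - i)) \<and>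
       (\<forall>i\<in>{1..n - l}. x l \<le> 1 + x (l + i) + x (n + 1 - i)))"

definition w_count :: "nat \<Rightarrow> nat \<Rightarrow> nat" where
  "w_count \<mu> g = card {xs. composition g xs \<and> weakly_admissible xs \<and> Max (set xs) = \<mu>}"

definition W_series :: "nat \<Rightarrow> rat fps" where
  "W_series \<mu> = Abs_fps (\<lambda>g. of_nat (w_count \<mu> g))"

definition I_series :: "nat \<Rightarrow> rat fps" where
  "I_series n = (\<Sum>(a,b)\<in>{(a,b). a \<in> {1..n} \<and> b \<in> {1..n} \<and> a + b \<ge> n}. fps_X ^ (a + b))"

end

theory Submission
  imports Defs
begin

text \<open>
  Cutting a weakly admissible composition with maximal part \<open>\<mu>\<close> at its last maximal part
  leaves a prefix with parts \<open>\<le> \<mu>\<close> in which mirrored parts sum to at least \<open>\<mu>\<close>, and a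
  suffix with parts \<open>< \<mu>\<close> in which mirrored parts sum to at least \<open>\<mu> - 1\<close>; the two
  conditions are independent, so the series factors as \<open>q\<^sup>\<mu>\<close> times the series of the two
  kinds of lists. A list with parts in \<open>{1..M}\<close> whose mirrored parts sum to at least \<open>T\<close>
  is empty, a single part \<open>y\<close> with \<open>2y \<ge> T\<close>, or such a list wrapped in an outer pair
  \<open>(a, b)\<close> with \<open>a + b \<ge> T\<close>. Hence its series \<open>P\<close> satisfies \<open>P = 1 + \<Sum> q\<^sup>y + I P\<close>,
  which is solved by dividing by the unit \<open>1 - I\<close>.
\<close>

definition weight_series :: "'a set \<Rightarrow> ('a \<Rightarrow> nat) \<Rightarrow> 'b::semiring_1 fps" where
  "weight_series A w = Abs_fps (\<lambda>g. of_nat (card {x\<in>A. w x = g}))"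

definition finite_fibres :: "'a set \<Rightarrow> ('a \<Rightarrow> nat) \<Rightarrow> bool" where
  "finite_fibres A w \<longleftrightarrow> (\<forall>g. finite {x\<in>A. w x = g})"

lemma finite_fibres_subset:
  assumes "finite_fibres A w" "B \<subseteq> A"
  shows "finite_fibres B w"
  unfolding finite_fibres_def
proof
  fix g
  have "{x\<in>B. w x = g} \<subseteq> {x\<in>A. w x = g}" using assms(2) by blast
  then show "finite {x\<in>B. w x = g}"
    using assms(1) finite_subset unfolding finite_fibres_def by blast
qed

lemma finite_fibres_finite: "finite A \<Longrightarrow> finite_fibres A w"
  unfolding finite_fibres_def by simp

lemma finite_fibres_positive_lists: "finite_fibres {ys. \<forall>y\<in>set ys. 0 < (y::nat)} sum_list"
  unfolding finite_fibres_def
proof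
  fix g
  have "length ys \<le> sum_list ys" if "\<forall>y\<in>set ys. 0 < y" for ys :: "nat list"
    using that by (induction ys) auto
  then have "{ys\<in>{ys. \<forall>y\<in>set ys. 0 < y}. sum_list ys = g}
      \<subseteq> {xs. set xs \<subseteq> {0..g} \<and> length xs \<le> g}"
    using member_le_sum_list by fastforce
  then show "finite {ys\<in>{ys. \<forall>y\<in>set ys. 0 < y}. sum_list ys = g}"
    by (rule finite_subset) (rule finite_lists_length_le, simp)
qed

lemma weight_series_bij_betw:
  assumes "bij_betw h A B" "\<And>x. x \<in> A \<Longrightarrow> wB (h x) = wA x"
  shows "weight_series A wA = weight_series B wB"
proof -
  have "card {y\<in>B. wB y = g} = card {x\<in>A. wA x = g}" for g
  proof -
    have "bij_betw h {x\<in>A. wA x = g} {y\<in>B. wB y = g}"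
      using assms by (auto simp: bij_betw_def inj_on_def)
    then show ?thesis by (simp add: bij_betw_same_card)
  qed
  then show ?thesis unfolding weight_series_def by simp
qed

lemma weight_series_Un:
  assumes "A \<inter> B = {}" "finite_fibres A w" "finite_fibres B w"
  shows "weight_series (A \<union> B) w = weight_series A w + weight_series B w"
proof -
  have "{x\<in>A\<union>B. w x = g} = {x\<in>A. w x = g} \<union> {x\<in>B. w x = g}" for g by auto
  then show ?thesis using assms
    by (simp add: weight_series_def fps_eq_iff finite_fibres_def card_Un_disjoint disjoint_iff)
qed

lemma weight_series_Times:
  assumes "finite_fibres A wa" "finite_fibres B wb"
  shows "weight_series (A \<times> B) (\<lambda>(a,b). wa a + wb b) = weight_series A wa * weight_series B wb"
proof -
  have "card {p\<in>A\<times>B. (\<lambda>(a,b). wa a + wb b) p = g} =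
        (\<Sum>i=0..g. card {x\<in>A. wa x = i} * card {y\<in>B. wb y = g - i})" for g
  proof -
    have "{p\<in>A\<times>B. (\<lambda>(a,b). wa a + wb b) p = g} =
       (\<Union>i\<in>{0..g}. {x\<in>A. wa x = i} \<times> {y\<in>B. wb y = g - i})" by auto
    also have "card \<dots> = (\<Sum>i=0..g. card ({x\<in>A. wa x = i} \<times> {y\<in>B. wb y = g - i}))"
      by (rule card_UN_disjoint) (use assms in \<open>auto simp: finite_fibres_def\<close>)
    finally show ?thesis by (simp add: card_cartesian_product)
  qed
  then show ?thesis by (simp add: weight_series_def fps_eq_iff fps_mult_nth)
qed

lemma weight_series_finite:
  assumes "finite A"
  shows "weight_series A w = (\<Sum>x\<in>A. fps_X ^ w x)"
proof -
  have "(\<Sum>x\<in>A. fps_nth (fps_X ^ w x :: 'b fps) g) = of_nat (card {x\<in>A. w x = g})" for g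
    using assms by (simp add: sum.If_cases Int_def conj_commute eq_commute)
  then show ?thesis by (simp add: weight_series_def fps_eq_iff fps_sum_nth)
qed

lemma weight_series_add_const:
  "weight_series A (\<lambda>x. w x + c) = fps_X ^ c * weight_series A w"
proof -
  have "card {x\<in>A. w x + c = g} = (if g < c then 0 else card {x\<in>A. w x = g - c})" for g
    by (cases "g < c") (auto intro!: arg_cong[where f=card])
  then show ?thesis by (simp add: weight_series_def fps_eq_iff fps_X_power_mult_nth)
qed

definition mirror_lists :: "nat \<Rightarrow> nat \<Rightarrow> nat list set" where
  "mirror_lists M T = {ys. set ys \<subseteq> {1..M} \<and> list_all2 (\<lambda>u v. T \<le> u + v) ys (rev ys)}"

definition bounded_pairs :: "nat \<Rightarrow> nat \<Rightarrow> (nat \<times> nat) set" where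
  "bounded_pairs M T = {(a,b). a \<in> {1..M} \<and> b \<in> {1..M} \<and> T \<le> a + b}"

lemma finite_bounded_pairs: "finite (bounded_pairs M T)"
  by (rule finite_subset[of _ "{1..M} \<times> {1..M}"]) (auto simp: bounded_pairs_def)

lemma finite_fibres_mirror_lists: "finite_fibres (mirror_lists M T) sum_list"
  by (rule finite_fibres_subset[OF finite_fibres_positive_lists]) (auto simp: mirror_lists_def)

lemma Cons_snoc_in_mirror_lists_iff:
  "a # ys @ [b] \<in> mirror_lists M T \<longleftrightarrow> (a,b) \<in> bounded_pairs M T \<and> ys \<in> mirror_lists M T"
  by (auto simp: mirror_lists_def bounded_pairs_def list_all2_append add.commute)

lemma mirror_lists_eq:
  "mirror_lists M T = {[]} \<union> (\<lambda>y. [y]) ` {y. 1 \<le> y \<and> y \<le> M \<and> T \<le> y + y}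
     \<union> (\<lambda>((a,b),ys). a # ys @ [b]) ` (bounded_pairs M T \<times> mirror_lists M T)" (is "_ = ?R")
proof (intro equalityI subsetI)
  fix xs assume xs: "xs \<in> mirror_lists M T"
  show "xs \<in> ?R"
  proof (cases xs rule: rev_cases)
    case (snoc ys b)
    show ?thesis
    proof (cases ys)
      case Nil
      then show ?thesis using xs snoc by (auto simp: mirror_lists_def)
    next
      case (Cons a zs)
      then have "(a,b) \<in> bounded_pairs M T" "zs \<in> mirror_lists M T"
        using xs snoc Cons_snoc_in_mirror_lists_iff by auto
      then show ?thesis using snoc Cons by force
    qed
  qed simp
next
  fix xs assume "xs \<in> ?R"
  then show "xs \<in> mirror_lists M T"
    by (auto simp: Cons_snoc_in_mirror_lists_iff) (auto simp: mirror_lists_def)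
qed

lemma weight_series_mirror_lists_rec:
  fixes M T :: nat
  defines "P \<equiv> weight_series (mirror_lists M T) sum_list :: 'b::semiring_1 fps"
  shows "P = 1 + (\<Sum>y | 1 \<le> y \<and> y \<le> M \<and> T \<le> y + y. fps_X ^ y)
             + (\<Sum>(a,b)\<in>bounded_pairs M T. fps_X ^ (a + b)) * P"
proof -
  define Mid where "Mid = {y. 1 \<le> y \<and> y \<le> M \<and> T \<le> y + y}"
  define S where "S = (\<lambda>y. [y]) ` Mid"
  define H where "H = (\<lambda>((a,b),ys). a # ys @ [b]) ` (bounded_pairs M T \<times> mirror_lists M T)"
  have fibres: "finite_fibres B sum_list" if "B \<subseteq> mirror_lists M T" for B
    by (rule finite_fibres_subset[OF finite_fibres_mirror_lists that])
  have decomp: "mirror_lists M T = ({[]} \<union> S) \<union> H"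
    using mirror_lists_eq[of M T] by (simp add: S_def H_def Mid_def)
  have disjoint: "({[]} \<union> S) \<inter> H = {}" "{[]} \<inter> S = {}"
    by (auto simp: S_def H_def)
  have "P = weight_series ({[]} \<union> S) sum_list + weight_series H sum_list"
    unfolding P_def by (subst decomp, intro weight_series_Un disjoint fibres) (use decomp in blast)+
  also have "weight_series ({[]} \<union> S) sum_list = weight_series {[]} sum_list + weight_series S sum_list"
    by (intro weight_series_Un disjoint fibres) (use decomp in blast)+
  also have "weight_series S sum_list = weight_series Mid id"
    by (rule weight_series_bij_betw[where h="\<lambda>y. [y]", symmetric]) (auto simp: S_def bij_betw_def inj_on_def)
  also have "weight_series H sum_list = weight_series (bounded_pairs M T \<times> mirror_lists M T)
        (\<lambda>(p,ys). (\<lambda>(a,b). a + b) p + sum_list ys)"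
    by (rule weight_series_bij_betw[OF bij_betw_imageI, symmetric]) (auto simp: H_def inj_on_def)
  also have "\<dots> = weight_series (bounded_pairs M T) (\<lambda>(a,b). a + b) * P"
    unfolding P_def
    by (rule weight_series_Times)
      (simp_all add: finite_fibres_finite finite_bounded_pairs finite_fibres_mirror_lists)
  also have "weight_series (bounded_pairs M T) (\<lambda>(a,b). a + b) =
      (\<Sum>(a,b)\<in>bounded_pairs M T. fps_X ^ (a + b) :: 'b fps)"
    by (simp add: weight_series_finite finite_bounded_pairs case_prod_unfold)
  finally show ?thesis by (simp add: weight_series_finite Mid_def)
qed

lemma weight_series_mirror_lists:
  fixes M T :: nat
  shows "weight_series (mirror_lists M T) sum_list =
    (1 + (\<Sum>y | 1 \<le> y \<and> y \<le> M \<and> T \<le> y + y. fps_X ^ y))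
      / (1 - (\<Sum>(a,b)\<in>bounded_pairs M T. fps_X ^ (a + b)) :: 'b::field fps)"
proof -
  define P where "P = (weight_series (mirror_lists M T) sum_list :: 'b fps)"
  define I where "I = (\<Sum>(a,b)\<in>bounded_pairs M T. fps_X ^ (a + b) :: 'b fps)"
  have "fps_nth I 0 = 0"
    by (auto simp: I_def bounded_pairs_def fps_sum_nth intro!: sum.neutral)
  then have unit: "fps_nth (1 - I) 0 \<noteq> 0"
    by simp
  have "P * (1 - I) = 1 + (\<Sum>y | 1 \<le> y \<and> y \<le> M \<and> T \<le> y + y. fps_X ^ y)"
    using weight_series_mirror_lists_rec[of M T, where 'b='b]
    by (simp add: P_def I_def algebra_simps)
  then have "P = (1 + (\<Sum>y | 1 \<le> y \<and> y \<le> M \<and> T \<le> y + y. fps_X ^ y)) * inverse (1 - I)"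
    by (metis inverse_mult_eq_1'[OF unit] mult.assoc mult.right_neutral)
  then show ?thesis by (simp add: P_def I_def fps_divide_unit[OF unit[unfolded I_def]])
qed

lemma Max_append_Cons:
  assumes "\<forall>y\<in>set ys. y \<le> m" "\<forall>z\<in>set zs. z < m"
  shows "Max (set (ys @ m # zs)) = m"
  by (rule Max_eqI) (use assms in \<open>auto simp: less_imp_le\<close>)

lemma last_max_pos_append_Cons:
  assumes "\<forall>y\<in>set ys. y \<le> m" "\<forall>z\<in>set zs. z < m"
  shows "last_max_pos (ys @ m # zs) = Suc (length ys)"
  unfolding last_max_pos_def Max_append_Cons[OF assms]
proof (rule Greatest_equality)
  fix k assume k: "k \<in> {1..length (ys @ m # zs)} \<and> (ys @ m # zs) ! (k - 1) = m"
  show "k \<le> Suc (length ys)"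
  proof (rule ccontr)
    assume "\<not> k \<le> Suc (length ys)"
    define j where "j = k - 2 - length ys"
    have "k - 1 = length ys + Suc j" "j < length zs"
      using k \<open>\<not> k \<le> Suc (length ys)\<close> by (auto simp: j_def)
    then have "(ys @ m # zs) ! (k - 1) \<in> set zs"
      by (simp add: nth_append)
    then show False using k assms(2) by auto
  qed
qed simp

lemma weakly_admissible_append_Cons_iff:
  assumes "\<forall>y\<in>set ys. y \<le> m" "\<forall>z\<in>set zs. z < m"
  shows "weakly_admissible (ys @ m # zs) \<longleftrightarrow>
    list_all2 (\<lambda>u v. m \<le> u + v) ys (rev ys) \<and> list_all2 (\<lambda>u v. m - 1 \<le> u + v) zs (rev zs)"
proof -
  have Ball_1_iff: "(\<forall>i\<in>{1..N}. P i) \<longleftrightarrow> (\<forall>j<N. P (Suc j))" for N and P :: "nat \<Rightarrow> bool"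
    unfolding image_Suc_lessThan[symmetric] by auto
  show ?thesis
    unfolding weakly_admissible_def Let_def last_max_pos_append_Cons[OF assms] Ball_1_iff
      list_all2_conv_all_nth
    by (auto simp: nth_append rev_nth)
qed

lemma bij_betw_weakly_admissible_split:
  "bij_betw (\<lambda>(ys,zs). ys @ Suc \<nu> # zs) (mirror_lists (Suc \<nu>) (Suc \<nu>) \<times> mirror_lists \<nu> \<nu>)
    {xs. xs \<noteq> [] \<and> (\<forall>x\<in>set xs. 0 < x) \<and> weakly_admissible xs \<and> Max (set xs) = Suc \<nu>}"
    (is "bij_betw ?join (?A \<times> ?B) ?C")
proof (rule bij_betw_imageI)
  have prefix_bound: "\<forall>y\<in>set ys. y \<le> Suc \<nu>" if "ys \<in> ?A" for ys
    using that by (auto simp: mirror_lists_def subset_iff)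
  have suffix_bound: "\<forall>z\<in>set zs. z < Suc \<nu>" if "zs \<in> ?B" for zs
    using that by (auto simp: mirror_lists_def subset_iff)
  show "inj_on ?join (?A \<times> ?B)"
  proof (rule inj_onI)
    fix p q assume p: "p \<in> ?A \<times> ?B" and q: "q \<in> ?A \<times> ?B" and eq: "?join p = ?join q"
    obtain ys zs ys' zs' where pq: "p = (ys, zs)" "q = (ys', zs')"
      by fastforce
    have "last_max_pos (ys @ Suc \<nu> # zs) = Suc (length ys)"
      using p pq by (auto intro!: last_max_pos_append_Cons prefix_bound suffix_bound)
    moreover have "last_max_pos (ys' @ Suc \<nu> # zs') = Suc (length ys')"
      using q pq by (auto intro!: last_max_pos_append_Cons prefix_bound suffix_bound)
    ultimately have "length ys = length ys'" using eq pq by simp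
    then show "p = q" using eq pq by simp
  qed
  show "?join ` (?A \<times> ?B) = ?C"
  proof (intro equalityI subsetI)
    fix xs assume "xs \<in> ?join ` (?A \<times> ?B)"
    then obtain ys zs where xs: "xs = ys @ Suc \<nu> # zs" and "ys \<in> ?A" "zs \<in> ?B"
      by auto
    note bounds = prefix_bound[OF \<open>ys \<in> ?A\<close>] suffix_bound[OF \<open>zs \<in> ?B\<close>]
    have "Max (set xs) = Suc \<nu>"
      unfolding xs by (rule Max_append_Cons[OF bounds])
    moreover have "weakly_admissible xs"
      using \<open>ys \<in> ?A\<close> \<open>zs \<in> ?B\<close>
      unfolding xs weakly_admissible_append_Cons_iff[OF bounds] by (simp add: mirror_lists_def)
    moreover have "\<forall>x\<in>set xs. 0 < x"
      using \<open>ys \<in> ?A\<close> \<open>zs \<in> ?B\<close> by (auto simp: xs mirror_lists_def)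
    ultimately show "xs \<in> ?C" by (simp add: xs)
  next
    fix xs assume "xs \<in> ?C"
    then have xs: "xs \<noteq> []" "\<forall>x\<in>set xs. 0 < x" "weakly_admissible xs" "Max (set xs) = Suc \<nu>"
      by auto
    then have "Suc \<nu> \<in> set xs" by (metis Max_in finite_set set_empty)
    then obtain ys zs where split: "xs = ys @ Suc \<nu> # zs" "Suc \<nu> \<notin> set zs"
      by (metis split_list_last)
    have "\<forall>x\<in>set xs. x \<le> Suc \<nu>" using xs(4) by (metis List.finite_set Max_ge)
    then have "\<forall>y\<in>set ys. y \<le> Suc \<nu>" "\<forall>z\<in>set zs. z < Suc \<nu>"
      using split by (auto simp: le_less)
    with xs split show "xs \<in> ?join ` (?A \<times> ?B)"
      by (auto simp: weakly_admissible_append_Cons_iff mirror_lists_def Suc_le_eq less_Suc_eq_le)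
  qed
qed

lemma W_series_Suc_eq:
  "W_series (Suc \<nu>) = fps_X ^ Suc \<nu> *
    (weight_series (mirror_lists (Suc \<nu>) (Suc \<nu>)) sum_list * weight_series (mirror_lists \<nu> \<nu>) sum_list)"
proof -
  have "W_series (Suc \<nu>) = weight_series
      {xs. xs \<noteq> [] \<and> (\<forall>x\<in>set xs. 0 < x) \<and> weakly_admissible xs \<and> Max (set xs) = Suc \<nu>} sum_list"
    unfolding W_series_def weight_series_def w_count_def composition_def
    by (auto intro!: arg_cong[where f=Abs_fps] arg_cong[where f=card])
  also have "\<dots> = weight_series (mirror_lists (Suc \<nu>) (Suc \<nu>) \<times> mirror_lists \<nu> \<nu>)
      (\<lambda>p. (\<lambda>(ys,zs). sum_list ys + sum_list zs) p + Suc \<nu>)"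
    by (rule weight_series_bij_betw[OF bij_betw_weakly_admissible_split, symmetric]) auto
  also have "\<dots> = fps_X ^ Suc \<nu> * weight_series (mirror_lists (Suc \<nu>) (Suc \<nu>) \<times> mirror_lists \<nu> \<nu>)
      (\<lambda>(ys,zs). sum_list ys + sum_list zs)"
    by (rule weight_series_add_const)
  also have "weight_series (mirror_lists (Suc \<nu>) (Suc \<nu>) \<times> mirror_lists \<nu> \<nu>)
      (\<lambda>(ys,zs). sum_list ys + sum_list zs) =
    weight_series (mirror_lists (Suc \<nu>) (Suc \<nu>)) sum_list * weight_series (mirror_lists \<nu> \<nu>) sum_list"
    by (rule weight_series_Times) (rule finite_fibres_mirror_lists)+
  finally show ?thesis .
qed

theorem proposition9p1:
  fixes \<mu> :: nat
  assumes "\<mu> \<ge> 2"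
  shows "W_series \<mu> =
    (1 + (\<Sum>i = (\<mu> + 1) div 2..\<mu>. fps_X ^ i)) / (1 - I_series \<mu>)
    * fps_X ^ \<mu>
    * ((1 + (\<Sum>i = \<mu> div 2..\<mu> - 1. fps_X ^ i)) / (1 - I_series (\<mu> - 1)))"
proof -
  have middle: "{y. 1 \<le> y \<and> y \<le> n \<and> n \<le> y + y} = {(n + 1) div 2..n}" if "1 \<le> n" for n :: nat
    using that by auto
  have pairs: "(\<Sum>(a,b)\<in>bounded_pairs n n. fps_X ^ (a + b)) = I_series n" for n
    by (simp add: I_series_def bounded_pairs_def)
  have "W_series \<mu> = fps_X ^ \<mu> *
      (weight_series (mirror_lists \<mu> \<mu>) sum_list * weight_series (mirror_lists (\<mu> - 1) (\<mu> - 1)) sum_list)"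
    using W_series_Suc_eq[of "\<mu> - 1"] assms by (simp add: Suc_diff_le)
  moreover have "weight_series (mirror_lists \<mu> \<mu>) sum_list =
      (1 + (\<Sum>i = (\<mu> + 1) div 2..\<mu>. fps_X ^ i)) / (1 - I_series \<mu>)"
    using middle[of \<mu>] assms by (simp add: weight_series_mirror_lists pairs)
  moreover have "weight_series (mirror_lists (\<mu> - 1) (\<mu> - 1)) sum_list =
      (1 + (\<Sum>i = \<mu> div 2..\<mu> - 1. fps_X ^ i)) / (1 - I_series (\<mu> - 1))"
    using middle[of "\<mu> - 1"] assms by (simp add: weight_series_mirror_lists pairs)
  ultimately show ?thesis by (simp add: ac_simps)
qed

end
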